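(* Let $g:\mathbb{R}^d\to\mathbb{R}$ be convex and twice differentiable, minimized at $x^*$ with $\|x^*\|\le R$, $g^*=g(x^* )$, and $\epsilon>0$. Let $\omega:\mathbb{R}_+\to\mathbb{R}_+$ be continuously differentiable with $0<\omega'(s)\le\gamma\,\omega(s)/s$ for some $\gamma\ge1$ and all $s>0$. Let $\alpha\in[0,1)$, $\mu=\frac{8}{\sqrt{1-\alpha}}$, $c\ge1$ with $64(\alpha+\frac1c)\gamma^2\le1$, and suppose $\delta\le\min\{\frac{\epsilon}{9\mu Rc((1+\alpha)c+1)},\ 8\mu R\,\omega(8\mu R)\}$. Then for any $x^{(1)},x^{(2)}\in\mathbb{R}^d$ with $\|x^{(1)}-x^*\|,\|x^{(2)}-x^*\|\le\mu R$ and any $A$ with $\frac{1}{2\omega(2\mu R)}\le A\le\frac{R^2}{\epsilon}$, there is an algorithm that, after at most $6+\log_2\big[\big(\frac{160\mu Rc}{\delta}+\frac{9R^2}{\epsilon}\big)\omega(8c\mu R)\big]$ calls to an $(\alpha,\delta)$-approximate $\omega$-proximal step oracle for $g$, returns $y\in\mathbb{R}^d$ and $\lambda>0$ such that, writing $a=\frac{\lambda+\sqrt{\lambda^2+4\lambda A}}{2}$ and $\tilde x=\frac{a}{A+a}x^{(1)}+\frac{A}{A+a}x^{(2)}$, either (i) $g(y)\le g^*+\epsilon$ and $\omega(\|y-\tilde x\|)\|y-\tilde x\|\le c\delta$; or (ii) $\frac12\le\lambda\,\omega(\|y-\tilde x\|)\le1$, $\omega(\|y-\tilde x\|)\|y-\tilde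 x\|>c\delta$, and $\|\nabla g(y)+\omega(\|y-\tilde x\|)(y-\tilde x)\|\le\alpha\,\omega(\|y-\tilde x\|)\|y-\tilde x\|+\delta$.
   Context: Let $\omega:\mathbb{R}_+\to\mathbb{R}_+$ be non-decreasing, $\delta\ge0$, $\alpha\in[0,1)$. An $(\alpha,\delta)$-approximate $\omega$-proximal step oracle for $g$ is a procedure that, queried at any $x\in\mathbb{R}^d$, returns some $y$ with $\|\nabla g(y)+\omega(\|y-x\|)(y-x)\|\le\alpha\,\omega(\|y-x\|)\|y-x\|+\delta$ (the returned $y$ may be any such point, possibly different on repeated queries). *)

theory Defs
  imports "HOL-Analysis.Analysis"
begin

definition grad :: "('a::real_inner \<Rightarrow> real) \<Rightarrow> 'a \<Rightarrow> 'a" where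
  "grad g x = (THE D. GDERIV g x :> D)"

definition approx_prox_step ::
  "('a::real_inner \<Rightarrow> real) \<Rightarrow> (real \<Rightarrow> real) \<Rightarrow> real \<Rightarrow> real \<Rightarrow> 'a \<Rightarrow> 'a \<Rightarrow> bool" where
  "approx_prox_step g \<omega> \<alpha> \<delta> x y \<longleftrightarrow>
     norm (grad g y + \<omega> (norm (y - x)) *\<^sub>R (y - x))
       \<le> \<alpha> * \<omega> (norm (y - x)) * norm (y - x) + \<delta>"

text \<open>An oracle is modelled adversarially: its answer may depend on the whole history of
  previous (query, answer) pairs and on the current query, so repeated queries may receive
  different answers.\<close>
definition is_approx_prox_oracle ::
  "('a::real_inner \<Rightarrow> real) \<Rightarrow> (real \<Rightarrow> real) \<Rightarrow> real \<Rightarrow> real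
     \<Rightarrow> (('a \<times> 'a) list \<Rightarrow> 'a \<Rightarrow> 'a) \<Rightarrow> bool" where
  "is_approx_prox_oracle g \<omega> \<alpha> \<delta> Orc \<longleftrightarrow> (\<forall>h x. approx_prox_step g \<omega> \<alpha> \<delta> x (Orc h x))"

text \<open>An oracle algorithm is a (deterministic, arbitrary) map from the interaction history
  to either a next query (Inl x) or a final output (Inr out).  hist alg Orc k is the history
  after k rounds of interaction.\<close>
primrec hist :: "(('a \<times> 'a) list \<Rightarrow> 'a + 'b) \<Rightarrow> (('a \<times> 'a) list \<Rightarrow> 'a \<Rightarrow> 'a)
                  \<Rightarrow> nat \<Rightarrow> ('a \<times> 'a) list" where
  "hist alg Orc 0 = []"
| "hist alg Orc (Suc k) =
     (case alg (hist alg Orc k) of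
        Inl x \<Rightarrow> hist alg Orc k @ [(x, Orc (hist alg Orc k) x)]
      | Inr _ \<Rightarrow> hist alg Orc k)"

definition returns_within ::
  "(('a \<times> 'a) list \<Rightarrow> 'a + 'b) \<Rightarrow> (('a \<times> 'a) list \<Rightarrow> 'a \<Rightarrow> 'a) \<Rightarrow> real \<Rightarrow> 'b \<Rightarrow> bool" where
  "returns_within alg Orc N out \<longleftrightarrow>
     (\<exists>k::nat. real k \<le> N \<and> (\<forall>j<k. isl (alg (hist alg Orc j))) \<and> alg (hist alg Orc k) = Inr out)"

end

theory Submission
  imports Defs
begin

text \<open>
  The algorithm bisects over \<open>\<psi> = 1 / sqrt lam\<close>.  An answer \<open>y\<close> to the query at
  \<open>x(lam)\<close> with a short step (\<open>\<omega>(r) r \<le> c \<delta>\<close>, \<open>r = \<parallel>y - x(lam)\<parallel>\<close>) has a small gradient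
  and lies near \<open>x\<^sup>*\<close>, so it is \<open>\<epsilon>\<close>-optimal by convexity; otherwise \<open>lam \<omega>(r)\<close> is below
  \<open>1/2\<close>, above \<open>1\<close>, or acceptable.  Since \<open>\<nabla>g(y)\<close> points away from \<open>x\<^sup>*\<close>, long steps have
  \<open>r \<le> 2\<parallel>x(lam) - x\<^sup>*\<parallel> \<le> 2\<mu>R\<close>; hence \<open>lam \<omega>(r) < 1/2\<close> at the largest \<open>\<psi>\<close> and
  \<open>lam \<omega>(r) > 1\<close> at the smallest one.  Bisection keeps an interval whose ends carry
  such answers.  It cannot shrink below \<open>\<kappa>\<close>: for two queries that close, the query
  points are within a small multiple of the step length, so monotonicity of \<open>\<nabla>g\<close> makes
  the two step lengths nearly equal, and the growth condition on \<open>\<omega>\<close> then changes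
  \<open>lam \<omega>(r)\<close> by less than a factor \<open>2\<close>.  This bounds the number of calls by
  \<open>log\<^sub>2((\<psi>_hi - \<psi>_lo) / \<kappa>) + 3\<close>.
\<close>

section \<open>Convexity and gradients\<close>

lemma convex_on_gderiv_ge:
  fixes g :: "'a::real_inner \<Rightarrow> real"
  assumes cv: "convex_on UNIV g" and D: "GDERIV g y :> D"
  shows "g y + inner D (z - y) \<le> g z"
proof -
  define v where "v = z - y"
  define \<phi> where "\<phi> t = g (y + t *\<^sub>R v)" for t :: real
  have "convex_on UNIV \<phi>"
  proof (rule convex_onI)
    fix u s t :: real assume "0 < u" "u < 1"
    have "y + ((1 - u) *\<^sub>R s + u *\<^sub>R t) *\<^sub>R v = (1 - u) *\<^sub>R (y + s *\<^sub>R v) + u *\<^sub>R (y + t *\<^sub>R v)"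
      by (simp add: algebra_simps)
    then show "\<phi> ((1 - u) *\<^sub>R s + u *\<^sub>R t) \<le> (1 - u) * \<phi> s + u * \<phi> t"
      unfolding \<phi>_def using convex_onD[OF cv, of u] \<open>0 < u\<close> \<open>u < 1\<close> by simp
  qed simp
  moreover have "(\<phi> has_field_derivative inner v D) (at 0)"
  proof -
    have "(g has_derivative (\<lambda>h. inner h D)) (at (y + 0 *\<^sub>R v))"
      using D by (simp add: gderiv_def)
    moreover have "((\<lambda>t. y + t *\<^sub>R v) has_derivative (\<lambda>t. t *\<^sub>R v)) (at 0)"
      by (auto intro!: derivative_eq_intros)
    ultimately have "(\<phi> has_derivative (\<lambda>t. inner (t *\<^sub>R v) D)) (at 0)"
      unfolding \<phi>_def using has_derivative_compose by blast
    then show ?thesis by (simp add: has_field_derivative_def mult.commute[of _ "inner v D"])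
  qed
  ultimately have "inner v D * (1 - 0) \<le> \<phi> 1 - \<phi> 0"
    by (intro convex_on_imp_above_tangent[where A = UNIV]) auto
  then show ?thesis unfolding \<phi>_def v_def by (simp add: inner_commute)
qed

lemma gderiv_grad:
  fixes g :: "'a::euclidean_space \<Rightarrow> real"
  assumes "g differentiable (at y)"
  shows "GDERIV g y :> grad g y"
proof -
  obtain f' where f': "(g has_derivative f') (at y)"
    using assms differentiable_def by blast
  define D where "D = (\<Sum>b\<in>Basis. f' b *\<^sub>R b)"
  have "f' h = inner h D" for h
  proof -
    have "f' h = f' (\<Sum>b\<in>Basis. inner h b *\<^sub>R b)" by (simp add: euclidean_representation)
    also have "\<dots> = (\<Sum>b\<in>Basis. inner h b * f' b)"
      using has_derivative_linear[OF f'] by (simp add: linear_sum linear_scale)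
    also have "\<dots> = inner h D" unfolding D_def by (simp add: inner_sum_right mult.commute)
    finally show ?thesis .
  qed
  then have D: "GDERIV g y :> D"
    using f' by (simp add: gderiv_def) (metis ext)
  have "E = D" if "GDERIV g y :> E" for E
  proof -
    have "(\<lambda>h. inner h E) = (\<lambda>h. inner h D)"
      using has_derivative_unique that D unfolding gderiv_def by blast
    then have "inner (E - D) (E - D) = 0"
      by (metis inner_diff_right diff_self)
    then show ?thesis by simp
  qed
  with D show ?thesis unfolding grad_def by (metis theI)
qed

lemma convex_grad_ge:
  fixes g :: "'a::euclidean_space \<Rightarrow> real"
  assumes "convex_on UNIV g" and "g differentiable (at y)"
  shows "g y + inner (grad g y) (z - y) \<le> g z"
  using convex_on_gderiv_ge[OF assms(1) gderiv_grad[OF assms(2)]] .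

lemma convex_grad_inner_minimizer_nonneg:
  fixes g :: "'a::euclidean_space \<Rightarrow> real"
  assumes "convex_on UNIV g" and "g differentiable (at y)" and "\<forall>z. g xstar \<le> g z"
  shows "0 \<le> inner (grad g y) (y - xstar)"
proof -
  have "g y + inner (grad g y) (xstar - y) \<le> g xstar"
    using convex_grad_ge[OF assms(1,2)] .
  with assms(3) show ?thesis
    by (smt (verit) inner_minus_right minus_diff_eq)
qed

lemma convex_grad_monotone:
  fixes g :: "'a::euclidean_space \<Rightarrow> real"
  assumes "convex_on UNIV g" and "g differentiable (at x)" and "g differentiable (at y)"
  shows "0 \<le> inner (grad g x - grad g y) (x - y)"
proof -
  have "g x + inner (grad g x) (y - x) \<le> g y" "g y + inner (grad g y) (x - y) \<le> g x"
    using convex_grad_ge assms by blast+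
  then show ?thesis
    by (smt (verit) inner_diff_left inner_minus_right minus_diff_eq)
qed

section \<open>Geometry of approximate proximal steps\<close>

lemma inner_scaled_diff_ge:
  fixes u v :: "'a::real_inner"
  assumes "0 \<le> a" "0 \<le> b"
  shows "(norm v - norm u) * (b * norm v - a * norm u) \<le> inner (a *\<^sub>R u - b *\<^sub>R v) (u - v)"
proof -
  have "inner (a *\<^sub>R u - b *\<^sub>R v) (u - v) = a * (norm u)\<^sup>2 + b * (norm v)\<^sup>2 - (a + b) * inner u v"
    by (simp add: inner_diff_left inner_diff_right power2_norm_eq_inner inner_commute algebra_simps)
  moreover have "(a + b) * inner u v \<le> (a + b) * (norm u * norm v)"
    using assms norm_cauchy_schwarz[of u v] by (intro mult_left_mono) auto
  ultimately show ?thesis by (simp add: power2_eq_square algebra_simps)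
qed

lemma step_radius_le_twice_dist:
  fixes G x y xstar :: "'a::real_inner"
  defines "r \<equiv> norm (y - x)"
  assumes mono: "0 \<le> inner G (y - xstar)"
    and err: "norm (G + w *\<^sub>R (y - x)) \<le> \<beta> * (w * r)"
    and w: "0 < w" and \<beta>: "\<beta> \<le> 1/3"
  shows "r \<le> 2 * norm (x - xstar)"
proof -
  define D where "D = norm (x - xstar)"
  define e where "e = G + w *\<^sub>R (y - x)"
  have "inner G (y - xstar) = inner e (y - xstar) - w * inner (y - x) (y - xstar)"
    unfolding e_def by (simp add: inner_add_left)
  moreover have "inner e (y - xstar) \<le> \<beta> * (w * r) * (r + D)"
  proof -
    have "norm (y - xstar) \<le> r + D"
      unfolding r_def D_def by (rule norm_diff_triangle_le) auto
    then have "inner e (y - xstar) \<le> norm e * (r + D)"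
      using norm_cauchy_schwarz[of e "y - xstar"] by (meson mult_left_mono norm_ge_zero order_trans)
    also have "\<dots> \<le> \<beta> * (w * r) * (r + D)"
      using err unfolding e_def r_def D_def by (intro mult_right_mono) auto
    finally show ?thesis .
  qed
  moreover have "r\<^sup>2 - r * D \<le> inner (y - x) (y - xstar)"
  proof -
    have "inner (y - x) (y - xstar) = r\<^sup>2 + inner (y - x) (x - xstar)"
      unfolding r_def by (simp add: inner_diff_right power2_norm_eq_inner)
    moreover have "- (r * D) \<le> inner (y - x) (x - xstar)"
      using Cauchy_Schwarz_ineq2[of "y - x" "x - xstar"] unfolding r_def D_def by simp
    ultimately show ?thesis by simp
  qed
  ultimately have "w * (r\<^sup>2 - r * D) \<le> \<beta> * (w * r) * (r + D)"
    using mono w by (smt (verit) mult_left_mono)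
  then have "w * (r * ((1 - \<beta>) * r - (1 + \<beta>) * D)) \<le> 0"
    by (simp add: power2_eq_square algebra_simps)
  then have "r = 0 \<or> (1 - \<beta>) * r \<le> (1 + \<beta>) * D"
    using w by (auto simp: mult_le_0_iff r_def)
  moreover have "(1 + \<beta>) * D \<le> (1 - \<beta>) * (2 * D)"
  proof -
    have "0 \<le> (1 - 3 * \<beta>) * D" using \<beta> by (simp add: D_def)
    then show ?thesis by (simp add: algebra_simps)
  qed
  ultimately have "r = 0 \<or> (1 - \<beta>) * r \<le> (1 - \<beta>) * (2 * D)"
    by linarith
  then show ?thesis
    using \<beta> unfolding D_def by (auto simp: mult_le_cancel_left_pos)
qed


lemma step_radii_cross_bound:
  fixes Gl Gh xl yl xh yh :: "'a::real_inner"
  defines "rl \<equiv> norm (yl - xl)" and "rh \<equiv> norm (yh - xh)"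
  assumes mono: "0 \<le> inner (Gl - Gh) (yl - yh)"
    and errl: "norm (Gl + wl *\<^sub>R (yl - xl)) \<le> \<beta> * (wl * rl)"
    and errh: "norm (Gh + wh *\<^sub>R (yh - xh)) \<le> \<beta> * (wh * rh)"
    and wl: "0 \<le> wl" and wh: "0 \<le> wh" and \<beta>: "0 \<le> \<beta>"
  shows "(rh - rl) * (wh * rh - wl * rl)
           \<le> (wl * rl + wh * rh) * (\<beta> * (rl + rh) + (1 + \<beta>) * norm (xl - xh))"
proof -
  define el where "el = Gl + wl *\<^sub>R (yl - xl)"
  define eh where "eh = Gh + wh *\<^sub>R (yh - xh)"
  define P where "P = wl *\<^sub>R (yl - xl) - wh *\<^sub>R (yh - xh)"
  define d where "d = xl - xh"
  have hl: "0 \<le> wl * rl" and hh: "0 \<le> wh * rh"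
    using wl wh by (simp_all add: rl_def rh_def)
  have G: "Gl - Gh = (el - eh) - P" and Y: "yl - yh = ((yl - xl) - (yh - xh)) + d"
    unfolding el_def eh_def P_def d_def by (simp_all add: algebra_simps)
  have "inner (Gl - Gh) (yl - yh) = inner (el - eh) (yl - yh) - inner P (yl - yh)"
    unfolding G by (rule inner_diff_left)
  moreover have "inner P (yl - yh) = inner P ((yl - xl) - (yh - xh)) + inner P d"
    unfolding Y by (rule inner_add_right)
  moreover have "(rh - rl) * (wh * rh - wl * rl) \<le> inner P ((yl - xl) - (yh - xh))"
    unfolding P_def rl_def rh_def using inner_scaled_diff_ge wl wh by blast
  moreover have "inner (el - eh) (yl - yh) \<le> (\<beta> * (wl * rl) + \<beta> * (wh * rh)) * (rl + rh + norm d)"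
  proof -
    have "norm (yl - yh) \<le> norm ((yl - xl) - (yh - xh)) + norm d"
      unfolding Y by (rule norm_triangle_ineq)
    also have "\<dots> \<le> rl + rh + norm d"
      unfolding rl_def rh_def using norm_triangle_ineq4 by simp
    finally have "norm (yl - yh) \<le> rl + rh + norm d" .
    moreover have "norm (el - eh) \<le> \<beta> * (wl * rl) + \<beta> * (wh * rh)"
      using errl errh norm_triangle_ineq4[of el eh] unfolding el_def eh_def by linarith
    ultimately have "norm (el - eh) * norm (yl - yh) \<le> (\<beta> * (wl * rl) + \<beta> * (wh * rh)) * (rl + rh + norm d)"
      using \<beta> hl hh by (intro mult_mono) auto
    then show ?thesis
      using norm_cauchy_schwarz[of "el - eh" "yl - yh"] by linarith
  qed
  moreover have "- inner P d \<le> (wl * rl + wh * rh) * norm d"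
  proof -
    have "norm P \<le> wl * rl + wh * rh"
      using norm_triangle_ineq4[of "wl *\<^sub>R (yl - xl)" "wh *\<^sub>R (yh - xh)"] wl wh
      unfolding P_def rl_def rh_def by simp
    then have "norm P * norm d \<le> (wl * rl + wh * rh) * norm d"
      by (rule mult_right_mono) simp
    then show ?thesis
      using norm_cauchy_schwarz[of "- P" d] by simp
  qed
  ultimately have "(rh - rl) * (wh * rh - wl * rl)
                     \<le> (\<beta> * (wl * rl) + \<beta> * (wh * rh)) * (rl + rh + norm d) + (wl * rl + wh * rh) * norm d"
    using mono by linarith
  then show ?thesis unfolding d_def by (simp add: algebra_simps)
qed

lemma gap_sq_le_of_cross_bound:
  fixes rl rh hl hh \<beta> \<eta> :: real
  assumes rl: "0 < rl" and rh: "rl \<le> rh" and hl: "0 < hl" and hr: "rh * hl \<le> hh * rl"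
    and \<beta>: "0 \<le> \<beta>" and \<eta>: "0 \<le> \<eta>"
    and cross: "(rh - rl) * (hh - hl) \<le> (hl + hh) * (\<beta> * (rl + rh) + (1 + \<beta>) * (\<eta> * rl))"
  shows "(rh - rl)\<^sup>2 \<le> (rh + rl)\<^sup>2 * (\<beta> + (1 + \<beta>) * \<eta>)"
proof -
  have hh: "hl \<le> hh"
  proof -
    have "rl * hl \<le> rh * hl" using rh hl by (simp add: mult_right_mono)
    then have "hl * rl \<le> hh * rl" using hr by (simp add: algebra_simps)
    then show ?thesis using rl by simp
  qed
  have "(rh - rl)\<^sup>2 * (hh + hl) = (rh - rl) * ((hh + hl) * (rh - rl))"
    by (simp add: power2_eq_square algebra_simps)
  also have "\<dots> \<le> (rh - rl) * ((hh - hl) * (rh + rl))"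
    using hr rh by (intro mult_left_mono) (auto simp: algebra_simps)
  also have "\<dots> = ((rh - rl) * (hh - hl)) * (rh + rl)" by (simp add: algebra_simps)
  also have "\<dots> \<le> ((hl + hh) * (\<beta> * (rl + rh) + (1 + \<beta>) * (\<eta> * rl))) * (rh + rl)"
    using cross rl rh by (intro mult_right_mono) auto
  finally have "(rh - rl)\<^sup>2 * (hh + hl) \<le> (hh + hl) * ((\<beta> * (rl + rh) + (1 + \<beta>) * (\<eta> * rl)) * (rh + rl))"
    by (simp add: algebra_simps)
  then have "(rh - rl)\<^sup>2 \<le> (\<beta> * (rl + rh) + (1 + \<beta>) * (\<eta> * rl)) * (rh + rl)"
    using hl hh by (simp add: mult.commute)
  also have "\<dots> \<le> (\<beta> * (rl + rh) + (1 + \<beta>) * (\<eta> * (rl + rh))) * (rh + rl)"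
    using rl rh \<beta> \<eta> by (intro mult_right_mono add_mono mult_left_mono) auto
  also have "\<dots> = (rh + rl)\<^sup>2 * (\<beta> + (1 + \<beta>) * \<eta>)"
    by (simp add: power2_eq_square algebra_simps)
  finally show ?thesis .
qed

lemma ratio_excess_le:
  fixes rl rh S \<gamma> :: real
  assumes \<gamma>: "1 \<le> \<gamma>" and rl: "0 < rl" and rh: "rl \<le> rh"
    and gap: "(rh - rl)\<^sup>2 \<le> (rh + rl)\<^sup>2 * S" and S: "\<gamma>\<^sup>2 * S \<le> 193/8192"
  shows "\<gamma> * (rh / rl - 1) \<le> 37/100"
proof -
  define t where "t = rh / rl - 1"
  define K where "K = \<gamma> * t"
  have t: "0 \<le> t" using rl rh by (simp add: t_def le_divide_eq)
  have "rh - rl = t * rl" "rh + rl = (t + 2) * rl"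
    using rl by (simp_all add: t_def algebra_simps)
  with gap have "t\<^sup>2 * rl\<^sup>2 \<le> ((t + 2)\<^sup>2 * S) * rl\<^sup>2"
    by (simp only: power_mult_distrib ac_simps)
  then have tt: "t\<^sup>2 \<le> (t + 2)\<^sup>2 * S" using rl by simp
  have K: "0 \<le> K" "t \<le> K"
    using t \<gamma> mult_right_mono[of 1 \<gamma> t] by (simp_all add: K_def)
  have "K\<^sup>2 = \<gamma>\<^sup>2 * t\<^sup>2" by (simp add: K_def power_mult_distrib)
  also have "\<dots> \<le> \<gamma>\<^sup>2 * ((t + 2)\<^sup>2 * S)" using tt by (intro mult_left_mono) auto
  also have "\<dots> = (\<gamma>\<^sup>2 * S) * (t + 2)\<^sup>2" by simp
  also have "\<dots> \<le> (193/8192) * (t + 2)\<^sup>2" using S by (intro mult_right_mono) auto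
  also have "\<dots> \<le> (193/8192) * (K + 2)\<^sup>2" using K t by (intro mult_left_mono power_mono) auto
  also have "\<dots> \<le> ((77/500) * (K + 2))\<^sup>2" \<comment> \<open>\<open>sqrt (193/8192) < 77/500\<close>\<close>
    unfolding power_mult_distrib by (intro mult_right_mono) (auto simp: power2_eq_square)
  finally have "K \<le> (77/500) * (K + 2)"
    by (rule power2_le_imp_le) (use K in simp)
  then have "K \<le> 77/500 * K + 77/500 * 2" by (simp only: distrib_left)
  then have "K \<le> 37/100" by linarith
  then show ?thesis by (simp add: K_def t_def)
qed

lemma exp_le_8_div_5:
  fixes K :: real
  assumes "0 \<le> K" "K \<le> 37/100"
  shows "exp K \<le> 8/5"
proof -
  have "(1 - K) * exp K \<le> exp (- K) * exp K"
    using exp_ge_add_one_self[of "- K"] by (intro mult_right_mono) auto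
  then have "(1 - K) * exp K \<le> 1" by (simp add: exp_minus)
  moreover have "(63/100) * exp K \<le> (1 - K) * exp K"
    using assms by (intro mult_right_mono) auto
  ultimately have "(63/100) * exp K \<le> 1" by linarith
  then show ?thesis by simp
qed

section \<open>Functions of controlled growth\<close>

locale controlled_growth =
  fixes \<omega> \<omega>' :: "real \<Rightarrow> real" and \<gamma> :: real
  assumes omega_nonneg: "\<forall>s\<ge>0. \<omega> s \<ge> 0"
    and omega_deriv: "\<forall>s\<ge>0. (\<omega> has_real_derivative \<omega>' s) (at s within {0..})"
    and omega_deriv_bounds: "\<forall>s>0. 0 < \<omega>' s \<and> \<omega>' s \<le> \<gamma> * \<omega> s / s"
begin

lemma omega_has_real_derivative:
  assumes "0 < s"
  shows "(\<omega> has_real_derivative \<omega>' s) (at s)"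
proof -
  have "at s within {0..} = at s"
    using assms by (intro at_within_interior) simp
  then show ?thesis using omega_deriv assms by (metis less_imp_le)
qed

lemma omega_less:
  assumes "0 \<le> s" "s < t"
  shows "\<omega> s < \<omega> t"
proof (rule DERIV_pos_imp_increasing_open[OF \<open>s < t\<close>])
  show "\<exists>y. (\<omega> has_real_derivative y) (at x) \<and> 0 < y" if "s < x" "x < t" for x
  proof -
    have "0 < x" using that \<open>0 \<le> s\<close> by simp
    then show ?thesis using omega_has_real_derivative omega_deriv_bounds by blast
  qed
  have "continuous_on {0..} \<omega>"
    unfolding continuous_on_eq_continuous_within using omega_deriv DERIV_continuous by fastforce
  then show "continuous_on {s..t} \<omega>"
    by (rule continuous_on_subset) (use \<open>0 \<le> s\<close> in auto)
qed

lemma omega_le: "0 \<le> s \<Longrightarrow> s \<le> t \<Longrightarrow> \<omega> s \<le> \<omega> t"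
  using omega_less[of s t] by (cases "s = t") auto

lemma omega_pos: "0 < s \<Longrightarrow> 0 < \<omega> s"
  using omega_less[of 0 s] omega_nonneg by force

text \<open>\<open>\<omega>(s) e^{-\<gamma> s / r}\<close> is non-increasing on \<open>s \<ge> r\<close>, since there \<open>\<omega>' \<le> \<gamma> \<omega> / s \<le> (\<gamma> / r) \<omega>\<close>.\<close>
lemma omega_growth:
  assumes "0 < r" "r \<le> t"
  shows "\<omega> t \<le> \<omega> r * exp (\<gamma> * (t / r - 1))"
proof -
  define k where "k = \<gamma> / r"
  define F where "F s = \<omega> s * exp (- k * s)" for s
  have "F t \<le> F r"
  proof (rule DERIV_nonpos_imp_nonincreasing[OF \<open>r \<le> t\<close>])
    fix x assume x: "r \<le> x" "x \<le> t"
    then have "0 < x" using \<open>0 < r\<close> by simp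
    have D: "(F has_real_derivative exp (- k * x) * (\<omega>' x - \<omega> x * k)) (at x)"
      unfolding F_def
      by (auto intro!: derivative_eq_intros omega_has_real_derivative[OF \<open>0 < x\<close>] simp: algebra_simps)
    have bound: "\<omega>' x \<le> \<gamma> * \<omega> x / x" and "0 < \<omega>' x"
      using omega_deriv_bounds \<open>0 < x\<close> by auto
    then have "0 < \<gamma> * \<omega> x / x" by linarith
    then have "0 \<le> \<gamma> * \<omega> x"
      using \<open>0 < x\<close> by (simp add: zero_less_divide_iff)
    with bound have "\<omega>' x \<le> \<gamma> * \<omega> x / r"
      using x \<open>0 < r\<close> divide_left_mono[of r x "\<gamma> * \<omega> x"] by simp
    then have "\<omega>' x \<le> \<omega> x * k"
      by (simp add: k_def mult.commute)
    then show "\<exists>y. (F has_real_derivative y) (at x) \<and> y \<le> 0"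
      using D by (auto intro!: mult_nonneg_nonpos)
  qed
  then have "\<omega> t * exp (- k * t) * exp (k * t) \<le> \<omega> r * exp (- k * r) * exp (k * t)"
    unfolding F_def by (rule mult_right_mono) simp
  then have "\<omega> t \<le> \<omega> r * exp (k * t - k * r)"
    by (simp add: mult.assoc exp_add[symmetric] exp_diff)
  also have "k * t - k * r = \<gamma> * (t / r - 1)"
    using \<open>0 < r\<close> by (simp add: k_def field_simps)
  finally show ?thesis .
qed

end

section \<open>Extrapolation points\<close>

definition acc_coeff :: "real \<Rightarrow> real \<Rightarrow> real" where
  "acc_coeff A lam = (lam + sqrt (lam\<^sup>2 + 4 * lam * A)) / 2"

definition acc_weight :: "real \<Rightarrow> real \<Rightarrow> real" where
  "acc_weight A lam = acc_coeff A lam / (A + acc_coeff A lam)"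

definition acc_point :: "real \<Rightarrow> 'a::real_vector \<Rightarrow> 'a \<Rightarrow> real \<Rightarrow> 'a" where
  "acc_point A x1 x2 lam =
     (let a = acc_coeff A lam in (a / (A + a)) *\<^sub>R x1 + (A / (A + a)) *\<^sub>R x2)"

context
  fixes A :: real
  assumes A: "0 < A"
begin

lemma acc_coeff_pos: "0 < lam \<Longrightarrow> 0 < acc_coeff A lam"
  unfolding acc_coeff_def using A by (simp add: add_pos_nonneg)

lemma acc_coeff_sq: "0 < lam \<Longrightarrow> (acc_coeff A lam)\<^sup>2 = lam * (A + acc_coeff A lam)"
  unfolding acc_coeff_def using A by (simp add: power2_eq_square field_simps)

lemma acc_coeff_mono: "0 < l \<Longrightarrow> l \<le> u \<Longrightarrow> acc_coeff A l \<le> acc_coeff A u"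
  unfolding acc_coeff_def using A
  by (intro divide_right_mono add_mono real_sqrt_le_mono power_mono mult_right_mono) auto

lemma acc_weight_eq: "0 < lam \<Longrightarrow> acc_weight A lam = lam / acc_coeff A lam"
  using acc_coeff_sq[of lam] acc_coeff_pos[of lam] A
  unfolding acc_weight_def by (simp add: power2_eq_square field_simps)

lemma acc_weight_bounds: "0 < lam \<Longrightarrow> 0 \<le> acc_weight A lam \<and> acc_weight A lam \<le> 1"
  using acc_coeff_pos[of lam] A unfolding acc_weight_def by simp

lemma acc_weight_mono: "0 < l \<Longrightarrow> l \<le> u \<Longrightarrow> acc_weight A l \<le> acc_weight A u"
  using acc_coeff_mono[of l u] acc_coeff_pos[of l] A
  unfolding acc_weight_def by (simp add: divide_simps algebra_simps mult_right_mono)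

lemma acc_weight_diff_le:
  assumes "0 < l" "l \<le> u"
  shows "acc_weight A u - acc_weight A l \<le> (u - l) / acc_coeff A l"
proof -
  have "u / acc_coeff A u \<le> u / acc_coeff A l"
    using assms acc_coeff_pos[of l] acc_coeff_mono[OF assms] by (intro divide_left_mono) auto
  then show ?thesis
    using assms acc_weight_eq[of u] acc_weight_eq[of l] by (simp add: diff_divide_distrib)
qed

lemma acc_point_eq: "0 < lam \<Longrightarrow> acc_point A x1 x2 lam = x2 + acc_weight A lam *\<^sub>R (x1 - x2)"
proof -
  assume "0 < lam"
  then have "A / (A + acc_coeff A lam) = 1 - acc_weight A lam"
    using acc_coeff_pos[of lam] A unfolding acc_weight_def by (simp add: field_simps)
  then have "acc_point A x1 x2 lam = acc_weight A lam *\<^sub>R x1 + (1 - acc_weight A lam) *\<^sub>R x2"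
    unfolding acc_point_def Let_def acc_weight_def by simp
  then show ?thesis by (simp add: algebra_simps)
qed

lemma norm_acc_point_diff:
  "0 < l \<Longrightarrow> 0 < u \<Longrightarrow>
     norm (acc_point A x1 x2 l - acc_point A x1 x2 u) = \<bar>acc_weight A l - acc_weight A u\<bar> * norm (x1 - x2)"
  by (simp add: acc_point_eq scaleR_diff_left[symmetric])

lemma norm_acc_point_le:
  assumes "0 < lam" "norm (x1 - z) \<le> \<rho>" "norm (x2 - z) \<le> \<rho>"
  shows "norm (acc_point A x1 x2 lam - z) \<le> \<rho>"
proof -
  define w where "w = acc_weight A lam"
  have w: "0 \<le> w" "w \<le> 1" using acc_weight_bounds[OF assms(1)] by (auto simp: w_def)
  have "acc_point A x1 x2 lam - z = w *\<^sub>R (x1 - z) + (1 - w) *\<^sub>R (x2 - z)"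
    using acc_point_eq[OF assms(1)] by (simp add: w_def algebra_simps)
  then have "norm (acc_point A x1 x2 lam - z) \<le> w * norm (x1 - z) + (1 - w) * norm (x2 - z)"
    using w norm_triangle_ineq[of "w *\<^sub>R (x1 - z)" "(1 - w) *\<^sub>R (x2 - z)"] by simp
  also have "\<dots> \<le> w * \<rho> + (1 - w) * \<rho>"
    using w assms by (intro add_mono mult_left_mono) auto
  finally show ?thesis by (simp add: algebra_simps)
qed

end

lemma hist_map_output: "hist (\<lambda>h. map_sum id f (alg h)) Orc k = hist alg Orc k"
  by (induction k) (auto split: sum.split)

lemma returns_within_map_output:
  assumes "returns_within alg Orc N out"
  shows "returns_within (\<lambda>h. map_sum id f (alg h)) Orc N (f out)"
proof -
  obtain k where "real k \<le> N" "\<forall>j<k. isl (alg (hist alg Orc j))" "alg (hist alg Orc k) = Inr out"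
    using assms unfolding returns_within_def by blast
  then show ?thesis
    unfolding returns_within_def hist_map_output by (intro exI[of _ k]) (simp add: isl_map_sum)
qed

section \<open>Bisection against an adversarial oracle\<close>

lemma nat_ceiling_log_le:
  fixes x T :: real
  assumes "0 < x" "x \<le> T" "1 \<le> T"
  shows "real (nat \<lceil>log 2 x\<rceil>) \<le> log 2 T + 1"
proof -
  have "log 2 x \<le> log 2 T" using assms by simp
  moreover have "0 \<le> log 2 T" using assms by simp
  ultimately show ?thesis by linarith
qed

datatype bisection_state = Probe_upper | Probe_lower | Bracket real real

locale bisection =
  fixes query :: "real \<Rightarrow> 'a" and too_high too_low :: "real \<Rightarrow> 'a \<Rightarrow> bool" and lo hi :: real
begin

fun probe :: "bisection_state \<Rightarrow> real" where
  "probe Probe_upper = hi"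
| "probe Probe_lower = lo"
| "probe (Bracket a b) = (a + b) / 2"

fun bisection_step :: "bisection_state \<Rightarrow> 'a \<Rightarrow> bisection_state + ('a \<times> real)" where
  "bisection_step Probe_upper y = (if too_high hi y then Inl Probe_lower else Inr (y, hi))"
| "bisection_step Probe_lower y = (if too_low lo y then Inl (Bracket lo hi) else Inr (y, lo))"
| "bisection_step (Bracket a b) y =
     (let m = (a + b) / 2 in
      if too_high m y then Inl (Bracket a m) else if too_low m y then Inl (Bracket m b) else Inr (y, m))"

primrec bisection_run :: "bisection_state \<Rightarrow> 'a list \<Rightarrow> bisection_state + ('a \<times> real)" where
  "bisection_run s [] = Inl s"
| "bisection_run s (y # ys) =
     (case bisection_step s y of Inl s' \<Rightarrow> bisection_run s' ys | Inr out \<Rightarrow> Inr out)"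

lemma bisection_run_snoc:
  "bisection_run s (ys @ [y]) =
     (case bisection_run s ys of Inl s' \<Rightarrow> bisection_step s' y | Inr out \<Rightarrow> Inr out)"
  by (induction ys arbitrary: s) (auto split: sum.splits)

definition bisection_alg :: "('a \<times> 'a) list \<Rightarrow> 'a + ('a \<times> real)" where
  "bisection_alg h =
     (case bisection_run Probe_upper (map snd h) of Inl s \<Rightarrow> Inl (query (probe s)) | Inr out \<Rightarrow> Inr out)"

end

locale bisection_admissible = bisection query too_high too_low lo hi
  for query :: "real \<Rightarrow> 'a" and too_high too_low lo hi +
  fixes adm :: "'a \<Rightarrow> 'a \<Rightarrow> bool" and \<kappa> :: real
  assumes lo_less_hi: "lo < hi" and kappa_pos: "0 < \<kappa>"
    and upper_not_too_low: "adm (query hi) y \<Longrightarrow> \<not> too_low hi y"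
    and lower_not_too_high: "adm (query lo) y \<Longrightarrow> \<not> too_high lo y"
    and no_jump: "\<lbrakk>lo \<le> a; a \<le> b; b - a \<le> \<kappa>; adm (query b) yb; too_high b yb;
                   adm (query a) ya; too_low a ya\<rbrakk> \<Longrightarrow> False"
begin

definition bisection_calls :: nat where
  "bisection_calls = nat \<lceil>log 2 ((hi - lo) / \<kappa>)\<rceil> + 2"

definition settled :: "'a \<times> real \<Rightarrow> bool" where
  "settled out \<longleftrightarrow>
     (case out of (y, \<psi>) \<Rightarrow> adm (query \<psi>) y \<and> \<not> too_high \<psi> y \<and> \<not> too_low \<psi> y \<and> lo \<le> \<psi>)"

fun bracket_inv :: "nat \<Rightarrow> bisection_state \<Rightarrow> bool" where
  "bracket_inv j Probe_upper \<longleftrightarrow> j = 0"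
| "bracket_inv j Probe_lower \<longleftrightarrow> j = 1 \<and> (\<exists>y. adm (query hi) y \<and> too_high hi y)"
| "bracket_inv j (Bracket a b) \<longleftrightarrow>
     2 \<le> j \<and> lo \<le> a \<and> a \<le> b \<and> b - a \<le> (hi - lo) / 2 ^ (j - 2) \<and>
     (\<exists>y. adm (query b) y \<and> too_high b y) \<and> (\<exists>y. adm (query a) y \<and> too_low a y)"

lemma bisection_step_inv:
  assumes inv: "bracket_inv j s" and y: "adm (query (probe s)) y"
  shows "case bisection_step s y of Inl s' \<Rightarrow> bracket_inv (Suc j) s' | Inr out \<Rightarrow> settled out"
proof (cases s)
  case Probe_upper
  then show ?thesis
    using inv y upper_not_too_low lo_less_hi by (auto simp: settled_def)
next
  case Probe_lower
  then show ?thesis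
    using inv y lower_not_too_high lo_less_hi by (auto simp: settled_def)
next
  case (Bracket a b)
  define m where "m = (a + b) / 2"
  from inv Bracket obtain i where "j = i + 2" and "b - a \<le> (hi - lo) / 2 ^ i"
    by (auto dest: le_Suc_ex simp: add.commute)
  then have "(b - a) / 2 \<le> (hi - lo) / 2 ^ (Suc j - 2)"
    by (simp add: field_simps)
  moreover have "m - a = (b - a) / 2" "b - m = (b - a) / 2" by (simp_all add: m_def field_simps)
  ultimately have halved: "m - a \<le> (hi - lo) / 2 ^ (Suc j - 2)" "b - m \<le> (hi - lo) / 2 ^ (Suc j - 2)"
    by metis+
  have step: "bisection_step s y =
      (if too_high m y then Inl (Bracket a m) else if too_low m y then Inl (Bracket m b) else Inr (y, m))"
    unfolding Bracket m_def by (simp only: bisection_step.simps Let_def)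
  have "lo \<le> a" "a \<le> b" "\<exists>y. adm (query b) y \<and> too_high b y" "\<exists>y. adm (query a) y \<and> too_low a y"
    using inv Bracket by auto
  moreover have "2 \<le> Suc j" "a \<le> m" "m \<le> b" "adm (query m) y"
    using inv y Bracket by (auto simp: m_def)
  ultimately show ?thesis
    unfolding step using halved by (auto simp: settled_def)
qed

lemma bracket_inv_bound:
  assumes "bracket_inv j s"
  shows "j < bisection_calls"
proof (rule ccontr)
  define n where "n = nat \<lceil>log 2 ((hi - lo) / \<kappa>)\<rceil>"
  assume "\<not> j < bisection_calls"
  then have j: "n + 2 \<le> j" by (simp add: bisection_calls_def n_def)
  with assms obtain a b ya yb where
    ab: "lo \<le> a" "a \<le> b" "b - a \<le> (hi - lo) / 2 ^ (j - 2)"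
    and yb: "adm (query b) yb" "too_high b yb" and ya: "adm (query a) ya" "too_low a ya"
    by (cases s) auto
  have "(hi - lo) / \<kappa> \<le> 2 ^ n"
  proof -
    have "log 2 ((hi - lo) / \<kappa>) \<le> real n" unfolding n_def by linarith
    then show ?thesis
      using lo_less_hi kappa_pos by (simp add: log_le_iff powr_realpow)
  qed
  moreover have "(2::real) ^ n \<le> 2 ^ (j - 2)"
    using j by (intro power_increasing) auto
  ultimately have "(hi - lo) / \<kappa> \<le> 2 ^ (j - 2)" by linarith
  then have "(hi - lo) / 2 ^ (j - 2) \<le> \<kappa>"
    using kappa_pos by (simp add: field_simps)
  then show False
    using no_jump[OF ab(1,2) _ yb ya] ab(3) by linarith
qed

lemma bisection_run_hist:
  assumes orc: "\<forall>h x. adm x (Orc h x)"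
  shows "(\<forall>s. bisection_run Probe_upper (map snd (hist bisection_alg Orc j)) = Inl s \<longrightarrow> bracket_inv j s) \<and>
         (\<forall>out. bisection_run Probe_upper (map snd (hist bisection_alg Orc j)) = Inr out \<longrightarrow> settled out)"
proof (induction j)
  case 0
  show ?case by simp
next
  case (Suc j)
  show ?case
  proof (cases "bisection_run Probe_upper (map snd (hist bisection_alg Orc j))")
    case (Inl s)
    define y where "y = Orc (hist bisection_alg Orc j) (query (probe s))"
    have "hist bisection_alg Orc (Suc j) = hist bisection_alg Orc j @ [(query (probe s), y)]"
      using Inl by (simp add: bisection_alg_def y_def)
    moreover have "case bisection_step s y of Inl s' \<Rightarrow> bracket_inv (Suc j) s' | Inr out \<Rightarrow> settled out"
      using Suc.IH Inl orc by (intro bisection_step_inv) (auto simp: y_def)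
    ultimately show ?thesis
      using Inl by (auto simp: bisection_run_snoc split: sum.splits)
  next
    case (Inr out)
    then have "hist bisection_alg Orc (Suc j) = hist bisection_alg Orc j"
      by (simp add: bisection_alg_def)
    then show ?thesis using Suc.IH Inr by auto
  qed
qed

theorem bisection_returns:
  assumes orc: "\<forall>h x. adm x (Orc h x)" and N: "real bisection_calls \<le> N"
  shows "\<exists>out. returns_within bisection_alg Orc N out \<and> settled out"
proof -
  let ?S = "\<lambda>j. bisection_run Probe_upper (map snd (hist bisection_alg Orc j))"
  have ex: "\<exists>out. ?S bisection_calls = Inr out"
    using bisection_run_hist[OF orc, of bisection_calls] bracket_inv_bound
    by (cases "?S bisection_calls") auto
  define k where "k = (LEAST j. \<exists>out. ?S j = Inr out)"
  obtain out where out: "?S k = Inr out"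
    using LeastI_ex[of "\<lambda>j. \<exists>out. ?S j = Inr out"] ex unfolding k_def by blast
  have before: "\<forall>j<k. \<nexists>out. ?S j = Inr out"
    using not_less_Least unfolding k_def by blast
  have "k \<le> bisection_calls"
    using Least_le[of "\<lambda>j. \<exists>out. ?S j = Inr out"] ex unfolding k_def by blast
  have "returns_within bisection_alg Orc N out"
    unfolding returns_within_def
  proof (intro exI conjI allI impI)
    show "real k \<le> N" using \<open>k \<le> bisection_calls\<close> N by linarith
    show "isl (bisection_alg (hist bisection_alg Orc j))" if j: "j < k" for j
    proof -
      obtain s where "?S j = Inl s" using before j by (cases "?S j") auto
      then show ?thesis unfolding bisection_alg_def[of "hist bisection_alg Orc j"] by simp
    qed
    show "bisection_alg (hist bisection_alg Orc k) = Inr out"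
      using out unfolding bisection_alg_def[of "hist bisection_alg Orc k"] by simp
  qed
  moreover have "settled out" using bisection_run_hist[OF orc, of k] out by blast
  ultimately show ?thesis by blast
qed

end

section \<open>Searching for the proximal parameter\<close>

locale prox_search = controlled_growth \<omega> \<omega>' \<gamma>
  for \<omega> \<omega>' :: "real \<Rightarrow> real" and \<gamma> :: real +
  fixes \<alpha> \<mu> c \<delta> \<epsilon> R A :: real
    and x1 x2 :: "'a::euclidean_space"
  assumes eps: "\<epsilon> > 0"
    and R: "R > 0"
    and gamma: "\<gamma> \<ge> 1"
    and alpha: "0 \<le> \<alpha>" "\<alpha> < 1"
    and mu: "\<mu> = 8 / sqrt (1 - \<alpha>)"
    and c: "c \<ge> 1" "64 * (\<alpha> + 1 / c) * \<gamma>^2 \<le> 1"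
    and delta_pos: "\<delta> > 0"
    and delta: "\<delta> \<le> min (\<epsilon> / (9 * \<mu> * R * c * ((1 + \<alpha>) * c + 1)))
                         (8 * \<mu> * R * \<omega> (8 * \<mu> * R))"
    and A: "1 / (2 * \<omega> (2 * \<mu> * R)) \<le> A" "A \<le> R^2 / \<epsilon>"
begin

abbreviation "\<omega>2 \<equiv> \<omega> (2 * \<mu> * R)"

definition "\<beta> = \<alpha> + 1 / c"
definition "\<eta> = 1 / (128 * \<gamma>\<^sup>2)"

definition "\<psi>_hi = 2 * sqrt \<omega>2"
definition "\<psi>_lo = sqrt (c * \<delta> / (2 * \<mu> * R))"
definition "\<kappa> = \<delta> / (7 * \<mu> * R * sqrt \<omega>2)"
definition Lam :: "real \<Rightarrow> real" where "Lam \<psi> = 1 / \<psi>\<^sup>2"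

abbreviation "xt lam \<equiv> acc_point A x1 x2 lam"

definition "large_step x y \<longleftrightarrow> c * \<delta> < \<omega> (norm (y - x)) * norm (y - x)"
definition "lam_too_small lam y \<longleftrightarrow> large_step (xt lam) y \<and> lam * \<omega> (norm (y - xt lam)) < 1/2"
definition "lam_too_large lam y \<longleftrightarrow> large_step (xt lam) y \<and> 1 < lam * \<omega> (norm (y - xt lam))"

sublocale bisection "\<lambda>\<psi>. xt (Lam \<psi>)" "\<lambda>\<psi>. lam_too_small (Lam \<psi>)" "\<lambda>\<psi>. lam_too_large (Lam \<psi>)" \<psi>_lo \<psi>_hi .

definition prox_alg :: "('a \<times> 'a) list \<Rightarrow> 'a + ('a \<times> real)" where
  "prox_alg h = map_sum id (\<lambda>(y, \<psi>). (y, Lam \<psi>)) (bisection_alg h)"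

lemma mu_ge: "8 \<le> \<mu>"
proof -
  have "sqrt (1 - \<alpha>) \<le> 1" "0 < sqrt (1 - \<alpha>)" using alpha by auto
  then show ?thesis unfolding mu by (simp add: divide_simps)
qed

lemma mu_c_ge: "8 \<le> \<mu> * c"
  using mu_ge c mult_mono[of 8 \<mu> 1 c] by simp

lemma omega2_pos: "0 < \<omega>2"
  using mu_ge R by (intro omega_pos) simp

lemma A_pos: "0 < A"
  using A(1) omega2_pos by (smt (verit) divide_pos_pos)

lemma beta_bounds: "\<beta> * \<gamma>\<^sup>2 \<le> 1/64" "0 \<le> \<beta>" "\<beta> \<le> 1/64"
proof -
  show "\<beta> * \<gamma>\<^sup>2 \<le> 1/64" using c(2) unfolding \<beta>_def by (simp add: algebra_simps)
  show "0 \<le> \<beta>" using c alpha unfolding \<beta>_def by simp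
  have "1 \<le> \<gamma>\<^sup>2" using gamma by simp
  with \<open>\<beta> * \<gamma>\<^sup>2 \<le> 1/64\<close> \<open>0 \<le> \<beta>\<close> show "\<beta> \<le> 1/64"
    by (smt (verit) mult_le_cancel_left1)
qed

lemma eta_c_ge: "1/2 \<le> \<eta> * c"
proof -
  have "64 * (1 / c) * \<gamma>\<^sup>2 \<le> 1"
    using c alpha order_trans[OF mult_right_mono[of "64 * (1 / c)" "64 * (\<alpha> + 1 / c)" "\<gamma>\<^sup>2"] c(2)]
    by simp
  then have "64 * \<gamma>\<^sup>2 \<le> c" using c by (simp add: field_simps)
  then show ?thesis using gamma unfolding \<eta>_def by (simp add: field_simps)
qed

lemma eps_le: "\<epsilon> \<le> 2 * R\<^sup>2 * \<omega>2"
proof -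
  have "1 \<le> A * (2 * \<omega>2)" "A * \<epsilon> \<le> R\<^sup>2"
    using A omega2_pos eps by (simp_all add: pos_divide_le_eq pos_le_divide_eq)
  then have "1 * \<epsilon> \<le> (A * (2 * \<omega>2)) * \<epsilon>"
    using eps by (intro mult_right_mono) auto
  also have "\<dots> = (A * \<epsilon>) * (2 * \<omega>2)" by simp
  also have "\<dots> \<le> R\<^sup>2 * (2 * \<omega>2)"
    using \<open>A * \<epsilon> \<le> R\<^sup>2\<close> omega2_pos by (intro mult_right_mono) auto
  finally show ?thesis by simp
qed

lemma c_delta_le: "9 * \<mu> * c * \<delta> \<le> 2 * R * \<omega>2"
proof -
  define D where "D = 9 * \<mu> * R * c"
  have D: "0 < D" using mu_ge R c by (simp add: D_def)
  have "1 \<le> (1 + \<alpha>) * c + 1" using alpha c by simp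
  then have "\<delta> * D \<le> \<delta> * D * ((1 + \<alpha>) * c + 1)"
    using mult_left_mono[of 1 "(1 + \<alpha>) * c + 1" "\<delta> * D"] D delta_pos by simp
  also have "\<dots> \<le> \<epsilon>"
  proof -
    have "0 < D * ((1 + \<alpha>) * c + 1)" using D \<open>1 \<le> (1 + \<alpha>) * c + 1\<close> by simp
    then show ?thesis using delta by (simp add: D_def pos_le_divide_eq mult.assoc)
  qed
  also have "\<dots> \<le> 2 * R\<^sup>2 * \<omega>2" by (rule eps_le)
  finally have "R * (9 * \<mu> * c * \<delta>) \<le> R * (2 * R * \<omega>2)"
    by (simp add: D_def power2_eq_square ac_simps)
  then show ?thesis using R by simp
qed

lemma psi_lo_sq: "\<psi>_lo\<^sup>2 = c * \<delta> / (2 * \<mu> * R)"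
  unfolding \<psi>_lo_def using c delta_pos mu_ge R by simp

lemma psi_lo_pos: "0 < \<psi>_lo"
  unfolding \<psi>_lo_def using c delta_pos mu_ge R by simp

lemma kappa_pos: "0 < \<kappa>"
  unfolding \<kappa>_def using delta_pos mu_ge R omega2_pos by simp

lemma kappa_le: "\<kappa> \<le> \<psi>_lo / 10"
proof -
  have "8\<^sup>2 \<le> (\<mu> * c)\<^sup>2"
    using mu_c_ge by (intro power_mono) auto
  then have "400 * (R * \<omega>2) \<le> 441 * (\<mu> * c)\<^sup>2 * (R * \<omega>2)"
    using R omega2_pos by (intro mult_right_mono) auto
  moreover have "200 * (9 * \<mu> * c * \<delta>) \<le> 200 * (2 * R * \<omega>2)"
    by (rule mult_left_mono[OF c_delta_le]) simp
  ultimately have "(9 * \<mu> * c) * (200 * \<delta>) \<le> (9 * \<mu> * c) * (49 * \<mu> * c * R * \<omega>2)"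
    by (simp add: power2_eq_square algebra_simps)
  then have "200 * \<delta> \<le> 49 * \<mu> * c * R * \<omega>2"
    using mu_ge c by (simp add: mult_le_cancel_left_pos ac_simps)
  have "\<delta>\<^sup>2 / (49 * \<mu>\<^sup>2 * R\<^sup>2 * \<omega>2) = (200 * \<delta>) * (\<delta> / (200 * 49 * \<mu>\<^sup>2 * R\<^sup>2 * \<omega>2))"
    by (simp add: power2_eq_square)
  also have "\<dots> \<le> (49 * \<mu> * c * R * \<omega>2) * (\<delta> / (200 * 49 * \<mu>\<^sup>2 * R\<^sup>2 * \<omega>2))"
    using \<open>200 * \<delta> \<le> 49 * \<mu> * c * R * \<omega>2\<close> delta_pos mu_ge R omega2_pos
    by (intro mult_right_mono divide_nonneg_pos) simp_all
  also have "\<dots> = c * \<delta> / (200 * \<mu> * R)"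
    using mu_ge R omega2_pos by (simp add: power2_eq_square field_simps)
  also have "\<dots> = (\<psi>_lo / 10)\<^sup>2"
    by (simp add: power_divide psi_lo_sq)
  finally have "\<kappa>\<^sup>2 \<le> (\<psi>_lo / 10)\<^sup>2"
    unfolding \<kappa>_def using omega2_pos by (simp add: power_divide power_mult_distrib)
  then show ?thesis by (rule power2_le_imp_le) (use psi_lo_pos in simp)
qed

lemma psi_lo_less_hi: "\<psi>_lo < \<psi>_hi"
proof -
  have "1 * (c * \<delta>) \<le> (9 * \<mu>) * (c * \<delta>)"
    using mu_ge c delta_pos by (intro mult_right_mono) auto
  also have "\<dots> \<le> 2 * R * \<omega>2"
    using c_delta_le by (simp add: mult.assoc)
  also have "\<dots> \<le> \<omega>2 * (2 * \<mu> * R)"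
    using mult_right_mono[of 1 \<mu> "2 * R * \<omega>2"] mu_ge R omega2_pos by (simp add: ac_simps)
  finally have "\<psi>_lo\<^sup>2 \<le> \<omega>2"
    unfolding psi_lo_sq using mu_ge R by (simp add: pos_divide_le_eq)
  also have "\<dots> < \<psi>_hi\<^sup>2"
    unfolding \<psi>_hi_def using omega2_pos by (simp add: power_mult_distrib)
  finally show ?thesis
    by (rule power_less_imp_less_base) (use omega2_pos in \<open>simp add: \<psi>_hi_def\<close>)
qed

lemma Lam_pos: "0 < \<psi> \<Longrightarrow> 0 < Lam \<psi>"
  unfolding Lam_def by simp

lemma Lam_hi: "Lam \<psi>_hi = 1 / (4 * \<omega>2)"
  unfolding Lam_def \<psi>_hi_def using omega2_pos by (simp add: power_mult_distrib)

lemma Lam_lo: "Lam \<psi>_lo = 2 * \<mu> * R / (c * \<delta>)"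
  unfolding Lam_def psi_lo_sq by simp

lemma acc_coeff_Lam_ge:
  assumes "0 < \<psi>"
  shows "2 / (3 * \<psi> * sqrt \<omega>2) \<le> acc_coeff A (Lam \<psi>)"
proof (rule power2_le_imp_le)
  have l: "0 < Lam \<psi>" using Lam_pos assms by simp
  have "(2 / (3 * \<psi> * sqrt \<omega>2))\<^sup>2 = Lam \<psi> * (4 / (9 * \<omega>2))"
    using omega2_pos by (simp add: Lam_def power_divide power_mult_distrib)
  also have "\<dots> \<le> Lam \<psi> * A"
    using A(1) omega2_pos l by (intro mult_left_mono) (auto simp: field_simps)
  also have "\<dots> \<le> (acc_coeff A (Lam \<psi>))\<^sup>2"
    using acc_coeff_sq[OF A_pos l] acc_coeff_pos[OF A_pos l] l by (simp add: algebra_simps)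
  finally show "(2 / (3 * \<psi> * sqrt \<omega>2))\<^sup>2 \<le> (acc_coeff A (Lam \<psi>))\<^sup>2" .
  show "0 \<le> acc_coeff A (Lam \<psi>)" using acc_coeff_pos[OF A_pos l] by simp
qed

lemma Lam_diff_le:
  assumes "0 < \<psi>u" "\<psi>u \<le> \<psi>l" "\<psi>l - \<psi>u \<le> \<kappa>" "\<psi>l \<le> (11/10) * \<psi>u"
  shows "Lam \<psi>u - Lam \<psi>l \<le> Lam \<psi>l * \<kappa> * (21/10) / \<psi>u"
proof -
  have "Lam \<psi>u - Lam \<psi>l = Lam \<psi>l * ((\<psi>l - \<psi>u) * (\<psi>l + \<psi>u) / \<psi>u\<^sup>2)"
    unfolding Lam_def using assms by (simp add: power2_eq_square divide_simps) (simp add: algebra_simps)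
  also have "\<dots> \<le> Lam \<psi>l * (\<kappa> * ((21/10) * \<psi>u) / \<psi>u\<^sup>2)"
    using assms kappa_pos Lam_pos[of \<psi>l]
    by (intro mult_left_mono divide_right_mono mult_mono) auto
  also have "\<dots> = Lam \<psi>l * \<kappa> * (21/10) / \<psi>u"
    using assms by (simp add: power2_eq_square)
  finally show ?thesis .
qed

text \<open>Nearby values of \<open>\<psi>\<close> give nearby query points: the weight \<open>a / (A + a)\<close> moves
  by at most \<open>\<Delta>lam / a\<close>, and \<open>a\<close> is bounded below via the lower bound on \<open>A\<close>.\<close>
lemma query_dist_le:
  assumes \<psi>: "0 < \<psi>u" "\<psi>u \<le> \<psi>l" "\<psi>l - \<psi>u \<le> \<kappa>" "\<psi>_lo \<le> \<psi>u"
    and x12: "norm (x1 - x2) \<le> 2 * \<mu> * R"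
  shows "norm (xt (Lam \<psi>l) - xt (Lam \<psi>u)) \<le> \<delta> * Lam \<psi>l"
proof -
  define l where "l = Lam \<psi>l"
  define u where "u = Lam \<psi>u"
  have l: "0 < l" and u: "0 < u" using \<psi> Lam_pos by (auto simp: l_def u_def)
  have lu: "l \<le> u"
    unfolding l_def u_def Lam_def using \<psi> by (intro divide_left_mono power_mono mult_pos_pos) auto
  have ratio: "\<psi>l \<le> (11/10) * \<psi>u" using \<psi> kappa_le by linarith
  have "acc_coeff A l \<ge> 2 / (3 * \<psi>l * sqrt \<omega>2)"
    unfolding l_def using \<psi> by (intro acc_coeff_Lam_ge) simp
  moreover have "2 / (3 * \<psi>l * sqrt \<omega>2) \<ge> 2 / (3 * ((11/10) * \<psi>u) * sqrt \<omega>2)"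
    using ratio \<psi> omega2_pos by (intro divide_left_mono mult_right_mono mult_pos_pos) auto
  ultimately have a_ge: "acc_coeff A l \<ge> 20 / (33 * \<psi>u * sqrt \<omega>2)" by simp
  have "\<bar>acc_weight A l - acc_weight A u\<bar> \<le> (u - l) / acc_coeff A l"
    using acc_weight_diff_le[OF A_pos l lu] acc_weight_mono[OF A_pos l lu] by simp
  also have "\<dots> \<le> (l * \<kappa> * (21/10) / \<psi>u) / (20 / (33 * \<psi>u * sqrt \<omega>2))"
    using Lam_diff_le[OF \<psi>(1-3) ratio] a_ge lu \<psi> omega2_pos
    by (intro frac_le) (auto simp: l_def u_def)
  also have "\<dots> = l * \<kappa> * sqrt \<omega>2 * (693/200)"
    using \<psi> omega2_pos by (simp add: divide_simps)
  finally have w: "\<bar>acc_weight A l - acc_weight A u\<bar> \<le> l * \<kappa> * sqrt \<omega>2 * (693/200)" .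
  have "norm (xt l - xt u) = \<bar>acc_weight A l - acc_weight A u\<bar> * norm (x1 - x2)"
    by (rule norm_acc_point_diff[OF A_pos l u])
  also have "\<dots> \<le> (l * \<kappa> * sqrt \<omega>2 * (693/200)) * (2 * \<mu> * R)"
    using w x12 l kappa_pos omega2_pos by (intro mult_mono) auto
  also have "\<dots> = l * \<delta> * (99/100)"
    unfolding \<kappa>_def using mu_ge R omega2_pos by (simp add: divide_simps)
  also have "\<dots> \<le> \<delta> * l" using l delta_pos by simp
  finally show ?thesis unfolding l_def u_def .
qed

lemma bisection_range_le: "(\<psi>_hi - \<psi>_lo) / \<kappa> \<le> 14 * \<mu> * R * \<omega>2 / \<delta>"
proof -
  have "(\<psi>_hi - \<psi>_lo) / \<kappa> \<le> 2 * sqrt \<omega>2 / \<kappa>"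
    unfolding \<psi>_hi_def using psi_lo_pos kappa_pos by (intro divide_right_mono) auto
  also have "\<dots> = 14 * \<mu> * R * \<omega>2 / \<delta>"
    unfolding \<kappa>_def using omega2_pos mu_ge R delta_pos
    by (simp add: field_simps)
  finally show ?thesis .
qed

lemma one_le_bisection_range: "1 \<le> 14 * \<mu> * R * \<omega>2 / \<delta>"
proof -
  have "1 * \<delta> \<le> (9 * \<mu> * c) * \<delta>"
    using mu_c_ge delta_pos by (intro mult_right_mono) auto
  also have "\<dots> \<le> 2 * R * \<omega>2"
    using c_delta_le by (simp add: ac_simps)
  also have "\<dots> \<le> 14 * \<mu> * R * \<omega>2"
    using mult_right_mono[of 2 "14 * \<mu>" "R * \<omega>2"] mu_ge R omega2_pos by (simp add: ac_simps)
  finally show ?thesis using delta_pos by simp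
qed

lemma bisection_range_le_budget:
  "14 * \<mu> * R * \<omega>2 / \<delta> \<le> (160 * \<mu> * R * c / \<delta> + 9 * R^2 / \<epsilon>) * \<omega> (8 * c * \<mu> * R)"
proof -
  have "\<omega>2 \<le> \<omega> (8 * c * \<mu> * R)"
    using mult_right_mono[of 2 "8 * c" "\<mu> * R"] c mu_ge R by (intro omega_le) (auto simp: ac_simps)
  moreover have "14 * \<mu> * R / \<delta> \<le> 160 * \<mu> * R * c / \<delta> + 9 * R^2 / \<epsilon>"
  proof -
    have "14 * (\<mu> * R) \<le> (160 * c) * (\<mu> * R)"
      using c mu_ge R by (intro mult_right_mono) auto
    then have "14 * \<mu> * R / \<delta> \<le> 160 * \<mu> * R * c / \<delta>"
      using delta_pos by (intro divide_right_mono) (auto simp: ac_simps)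
    moreover have "0 \<le> 9 * R^2 / \<epsilon>" using eps by simp
    ultimately show ?thesis by linarith
  qed
  ultimately have "(14 * \<mu> * R / \<delta>) * \<omega>2 \<le> (160 * \<mu> * R * c / \<delta> + 9 * R^2 / \<epsilon>) * \<omega> (8 * c * \<mu> * R)"
    using omega2_pos mu_ge R delta_pos c eps by (intro mult_mono) auto
  then show ?thesis by simp
qed

lemma bisection_calls_le:
  "real (nat \<lceil>log 2 ((\<psi>_hi - \<psi>_lo) / \<kappa>)\<rceil> + 2)
     \<le> 6 + log 2 ((160 * \<mu> * R * c / \<delta> + 9 * R^2 / \<epsilon>) * \<omega> (8 * c * \<mu> * R))"
proof -
  have "real (nat \<lceil>log 2 ((\<psi>_hi - \<psi>_lo) / \<kappa>)\<rceil>) \<le> log 2 (14 * \<mu> * R * \<omega>2 / \<delta>) + 1"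
    using psi_lo_less_hi kappa_pos bisection_range_le one_le_bisection_range
    by (intro nat_ceiling_log_le) auto
  also have "\<dots> \<le> log 2 ((160 * \<mu> * R * c / \<delta> + 9 * R^2 / \<epsilon>) * \<omega> (8 * c * \<mu> * R)) + 1"
    using bisection_range_le_budget one_le_bisection_range by simp
  finally show ?thesis by simp
qed

lemma large_step_radius_pos:
  assumes "large_step x y"
  shows "0 < norm (y - x)"
proof (rule ccontr)
  assume "\<not> ?thesis"
  moreover have "0 < c * \<delta>" using c delta_pos by simp
  ultimately show False using assms unfolding large_step_def by simp
qed

lemma too_small_radius_gt:
  assumes lam: "0 < lam" and y: "lam_too_small lam y"
  shows "2 * c * \<delta> * lam < norm (y - xt lam)"
proof -
  define r where "r = norm (y - xt lam)"
  have large: "c * \<delta> < \<omega> r * r" and small: "lam * \<omega> r < 1/2"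
    using y unfolding lam_too_small_def large_step_def r_def by auto
  have "0 < r"
    using y large_step_radius_pos unfolding lam_too_small_def r_def by blast
  then have "\<omega> r * r < r / (2 * lam)"
    using small lam by (simp add: field_simps)
  with large have "c * \<delta> < r / (2 * lam)" by linarith
  then show ?thesis using lam by (simp add: field_simps r_def)
qed

lemma small_step_radius_le:
  assumes "\<not> large_step x y"
  shows "norm (y - x) \<le> 8 * c * \<mu> * R"
proof (rule ccontr)
  define r where "r = norm (y - x)"
  assume "\<not> ?thesis"
  then have r: "8 * c * \<mu> * R < r" by (simp add: r_def)
  have "8 * \<mu> * R \<le> 8 * c * \<mu> * R"
    using mult_right_mono[of 1 c "8 * \<mu> * R"] c mu_ge R by (simp add: ac_simps)
  then have "\<omega> (8 * \<mu> * R) \<le> \<omega> r"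
    by (rule omega_le[rotated, OF order_trans]) (use r mu_ge R in auto)
  moreover have "0 < \<omega> (8 * \<mu> * R)" using mu_ge R by (intro omega_pos) simp
  ultimately have "\<omega> (8 * \<mu> * R) * (8 * c * \<mu> * R) < \<omega> r * r"
    using r c mu_ge R by (intro mult_le_less_imp_less) auto
  moreover have "c * \<delta> \<le> c * (8 * \<mu> * R * \<omega> (8 * \<mu> * R))"
    using delta c by (intro mult_left_mono) auto
  ultimately have "large_step x y"
    unfolding large_step_def r_def by (simp add: ac_simps)
  with assms show False ..
qed

lemma gamma_sq_gap_factor: "\<gamma>\<^sup>2 * (\<beta> + (1 + \<beta>) * \<eta>) \<le> 193/8192"
proof -
  have "\<gamma>\<^sup>2 * ((1 + \<beta>) * \<eta>) = (1 + \<beta>) / 128"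
    unfolding \<eta>_def using gamma by simp
  also have "\<dots> \<le> (65/64) / 128"
    using beta_bounds by (intro divide_right_mono) auto
  finally show ?thesis
    using beta_bounds(1) by (simp add: distrib_left mult.commute)
qed

lemma Lam_ratio_le:
  assumes "\<psi>_lo \<le> a" "a \<le> b" "b - a \<le> \<kappa>"
  shows "Lam a \<le> (121/100) * Lam b"
proof -
  have a: "0 < a" using assms psi_lo_pos by simp
  have "b \<le> (11/10) * a" using assms kappa_le by linarith
  then have "b\<^sup>2 \<le> ((11/10) * a)\<^sup>2"
    using assms a by (intro power_mono) auto
  then show ?thesis
    unfolding Lam_def using a assms by (simp add: power_mult_distrib divide_simps)
qed

end

locale prox_search_instance = prox_search \<omega> \<omega>' \<gamma> \<alpha> \<mu> c \<delta> \<epsilon> R A x1 x2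
  for \<omega> \<omega>' :: "real \<Rightarrow> real" and \<gamma> \<alpha> \<mu> c \<delta> \<epsilon> R A :: real
    and x1 x2 :: "'a::euclidean_space" +
  fixes g :: "'a \<Rightarrow> real" and xstar :: 'a
  assumes convex: "convex_on UNIV g"
    and differentiable: "\<forall>x. g differentiable (at x)"
    and minimizer: "\<forall>x. g xstar \<le> g x"
    and x1_near: "norm (x1 - xstar) \<le> \<mu> * R"
    and x2_near: "norm (x2 - xstar) \<le> \<mu> * R"
begin

abbreviation "adm \<equiv> approx_prox_step g \<omega> \<alpha> \<delta>"

definition prox_outcome :: "'a \<Rightarrow> real \<Rightarrow> bool" where
  "prox_outcome y lam \<longleftrightarrow>
     (let r = norm (y - xt lam)
      in (g y \<le> g xstar + \<epsilon> \<and> \<omega> r * r \<le> c * \<delta>)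
         \<or> (1/2 \<le> lam * \<omega> r \<and> lam * \<omega> r \<le> 1 \<and> c * \<delta> < \<omega> r * r \<and> adm (xt lam) y))"

lemma xt_near: "0 < lam \<Longrightarrow> norm (xt lam - xstar) \<le> \<mu> * R"
  using norm_acc_point_le[OF A_pos _ x1_near x2_near] .

lemma x1_x2_dist: "norm (x1 - x2) \<le> 2 * \<mu> * R"
  using norm_diff_triangle_le[OF x1_near, of x2 "\<mu> * R"] x2_near by (simp add: norm_minus_commute ac_simps)

lemma large_step_error_le:
  assumes "adm x y" "large_step x y"
  shows "norm (grad g y + \<omega> (norm (y - x)) *\<^sub>R (y - x)) \<le> \<beta> * (\<omega> (norm (y - x)) * norm (y - x))"
proof -
  have "\<delta> \<le> \<omega> (norm (y - x)) * norm (y - x) / c"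
    using assms(2) c unfolding large_step_def by (simp add: field_simps)
  then show ?thesis
    using assms(1) unfolding approx_prox_step_def \<beta>_def by (simp add: algebra_simps)
qed

lemma large_step_radius_le:
  assumes "adm x y" "large_step x y"
  shows "norm (y - x) \<le> 2 * norm (x - xstar)"
proof (rule step_radius_le_twice_dist)
  show "0 \<le> inner (grad g y) (y - xstar)"
    using convex differentiable minimizer by (intro convex_grad_inner_minimizer_nonneg) auto
  show "norm (grad g y + \<omega> (norm (y - x)) *\<^sub>R (y - x)) \<le> \<beta> * (\<omega> (norm (y - x)) * norm (y - x))"
    using large_step_error_le[OF assms] .
  show "0 < \<omega> (norm (y - x))"
    using large_step_radius_pos[OF assms(2)] by (rule omega_pos)
  show "\<beta> \<le> 1/3" using beta_bounds by simp
qed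

lemma small_step_near_optimal:
  assumes lam: "0 < lam" and y: "adm (xt lam) y" and small: "\<not> large_step (xt lam) y"
  shows "g y \<le> g xstar + \<epsilon>"
proof -
  define r where "r = norm (y - xt lam)"
  define G where "G = grad g y"
  have wr: "\<omega> r * r \<le> c * \<delta>" and w: "0 \<le> \<omega> r"
    using small omega_nonneg unfolding large_step_def r_def by auto
  have "norm G \<le> norm (G + \<omega> r *\<^sub>R (y - xt lam)) + \<omega> r * r"
    using norm_triangle_ineq4[of "G + \<omega> r *\<^sub>R (y - xt lam)" "\<omega> r *\<^sub>R (y - xt lam)"] w
    by (simp add: r_def)
  also have "\<dots> \<le> (1 + \<alpha>) * (\<omega> r * r) + \<delta>"
    using y unfolding approx_prox_step_def G_def r_def by (simp add: algebra_simps)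
  also have "\<dots> \<le> ((1 + \<alpha>) * c + 1) * \<delta>"
    using wr alpha mult_left_mono[OF wr, of "1 + \<alpha>"] by (simp add: algebra_simps)
  finally have nG: "norm G \<le> ((1 + \<alpha>) * c + 1) * \<delta>" .
  have "norm (y - xstar) \<le> r + norm (xt lam - xstar)"
    unfolding r_def by (rule norm_diff_triangle_le) auto
  also have "\<dots> \<le> 8 * c * \<mu> * R + \<mu> * R"
    using small_step_radius_le[OF small] xt_near[OF lam] by (simp add: r_def)
  also have "\<dots> \<le> 9 * c * \<mu> * R"
    using mult_right_mono[of 1 c "\<mu> * R"] c mu_ge R by (simp add: ac_simps)
  finally have ny: "norm (y - xstar) \<le> 9 * c * \<mu> * R" .
  have "g y - g xstar \<le> inner G (y - xstar)"
    using convex_grad_inner_minimizer_nonneg convex_grad_ge[OF convex, of y xstar] differentiable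
    unfolding G_def by (simp add: inner_diff_right)
  also have "\<dots> \<le> norm G * norm (y - xstar)" by (rule norm_cauchy_schwarz)
  also have "\<dots> \<le> (((1 + \<alpha>) * c + 1) * \<delta>) * (9 * c * \<mu> * R)"
    using nG ny alpha c delta_pos by (intro mult_mono) auto
  also have "\<dots> \<le> \<epsilon>"
  proof -
    have "0 < 9 * \<mu> * R * c * ((1 + \<alpha>) * c + 1)"
      using mu_ge R c alpha by (simp add: add_pos_nonneg)
    then show ?thesis using delta by (simp add: pos_le_divide_eq ac_simps)
  qed
  finally show ?thesis by simp
qed

lemma large_step_query_radius_le:
  assumes "0 < lam" "adm (xt lam) y" "large_step (xt lam) y"
  shows "norm (y - xt lam) \<le> 2 * \<mu> * R"
  using large_step_radius_le[OF assms(2,3)] xt_near[OF assms(1)] by simp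

lemma upper_not_too_large:
  assumes "adm (xt (Lam \<psi>_hi)) y"
  shows "\<not> lam_too_large (Lam \<psi>_hi) y"
proof
  define r where "r = norm (y - xt (Lam \<psi>_hi))"
  assume "lam_too_large (Lam \<psi>_hi) y"
  then have large: "large_step (xt (Lam \<psi>_hi)) y" and big: "1 < Lam \<psi>_hi * \<omega> r"
    unfolding lam_too_large_def r_def by auto
  have "0 < Lam \<psi>_hi" using psi_lo_pos psi_lo_less_hi Lam_pos by simp
  then have "\<omega> r \<le> \<omega>2"
    using large_step_query_radius_le[OF _ assms large] by (intro omega_le) (auto simp: r_def)
  then have "Lam \<psi>_hi * \<omega> r \<le> 1/4"
    unfolding Lam_hi using omega2_pos by (simp add: divide_simps)
  with big show False by simp
qed

lemma lower_not_too_small: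
  assumes "adm (xt (Lam \<psi>_lo)) y"
  shows "\<not> lam_too_small (Lam \<psi>_lo) y"
proof
  define r where "r = norm (y - xt (Lam \<psi>_lo))"
  assume "lam_too_small (Lam \<psi>_lo) y"
  then have large: "large_step (xt (Lam \<psi>_lo)) y" and small: "Lam \<psi>_lo * \<omega> r < 1/2"
    unfolding lam_too_small_def r_def by auto
  have "r \<le> 2 * \<mu> * R"
    using large_step_query_radius_le[OF _ assms large] psi_lo_pos Lam_pos by (simp add: r_def)
  then have "\<omega> r * r \<le> \<omega> r * (2 * \<mu> * R)"
    using omega_nonneg by (intro mult_left_mono) (auto simp: r_def)
  moreover have "c * \<delta> < \<omega> r * r" using large unfolding large_step_def r_def .
  ultimately have "1 < Lam \<psi>_lo * \<omega> r"
    unfolding Lam_lo using c delta_pos by (simp add: field_simps)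
  with small show False by simp
qed

lemma omega_ratio_le:
  assumes yl: "adm xl yl" "large_step xl yl" and yh: "adm xh yh" "large_step xh yh"
    and less: "norm (yl - xl) < norm (yh - xh)"
    and close: "norm (xl - xh) \<le> \<eta> * norm (yl - xl)"
  shows "\<omega> (norm (yh - xh)) \<le> 8/5 * \<omega> (norm (yl - xl))"
proof -
  define rl where "rl = norm (yl - xl)"
  define rh where "rh = norm (yh - xh)"
  have rl: "0 < rl" using large_step_radius_pos[OF yl(2)] by (simp add: rl_def)
  have wl: "0 < \<omega> rl" using rl by (rule omega_pos)
  have wlh: "\<omega> rl \<le> \<omega> rh" using rl less by (intro omega_le) (auto simp: rl_def rh_def)
  have \<beta>: "0 \<le> \<beta>" and \<eta>: "0 \<le> \<eta>" using beta_bounds by (auto simp: \<eta>_def)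
  have "(rh - rl) * (\<omega> rh * rh - \<omega> rl * rl)
          \<le> (\<omega> rl * rl + \<omega> rh * rh) * (\<beta> * (rl + rh) + (1 + \<beta>) * norm (xl - xh))"
    unfolding rl_def rh_def
  proof (rule step_radii_cross_bound)
    show "0 \<le> inner (grad g yl - grad g yh) (yl - yh)"
      using convex differentiable by (intro convex_grad_monotone) auto
  qed (use large_step_error_le[OF yl] large_step_error_le[OF yh] omega_nonneg \<beta> in auto)
  also have "\<dots> \<le> (\<omega> rl * rl + \<omega> rh * rh) * (\<beta> * (rl + rh) + (1 + \<beta>) * (\<eta> * rl))"
  proof (intro mult_left_mono add_left_mono)
    show "0 \<le> \<omega> rl * rl + \<omega> rh * rh"
      using omega_nonneg by (simp add: rl_def rh_def)
  qed (use close \<beta> in \<open>auto simp: rl_def\<close>)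
  finally have cross: "(rh - rl) * (\<omega> rh * rh - \<omega> rl * rl)
      \<le> (\<omega> rl * rl + \<omega> rh * rh) * (\<beta> * (rl + rh) + (1 + \<beta>) * (\<eta> * rl))" .
  have "(rh - rl)\<^sup>2 \<le> (rh + rl)\<^sup>2 * (\<beta> + (1 + \<beta>) * \<eta>)"
  proof (rule gap_sq_le_of_cross_bound[OF rl _ _ _ \<beta> \<eta> cross])
    show "rl \<le> rh" using less by (simp add: rl_def rh_def)
    show "0 < \<omega> rl * rl" using wl rl by simp
    show "rh * (\<omega> rl * rl) \<le> \<omega> rh * rh * rl"
      using mult_right_mono[OF wlh, of "rh * rl"] rl less by (simp add: ac_simps rl_def rh_def)
  qed
  then have K: "\<gamma> * (rh / rl - 1) \<le> 37/100"
    using gamma rl less gamma_sq_gap_factor by (intro ratio_excess_le) (auto simp: rl_def rh_def)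
  have "\<omega> rh \<le> \<omega> rl * exp (\<gamma> * (rh / rl - 1))"
    using rl less by (intro omega_growth) (auto simp: rl_def rh_def)
  also have "\<dots> \<le> \<omega> rl * (8/5)"
    using K gamma rl less wl by (intro mult_left_mono exp_le_8_div_5) (auto simp: rl_def rh_def)
  finally show ?thesis by (simp add: rl_def rh_def)
qed

text \<open>The two answers would straddle the admissible window \<open>[1/2, 1]\<close> for \<open>lam \<omega>(r)\<close>,
  but across a gap \<open>\<le> \<kappa>\<close> \<open>\<omega>(r)\<close> grows by at most \<open>8/5\<close> and lam by at most \<open>121/100\<close>,
  and \<open>8/5 \<cdot> 121/100 < 2\<close>.\<close>
lemma too_small_too_large_far_apart:
  assumes ab: "\<psi>_lo \<le> a" "a \<le> b"
    and yb: "adm (xt (Lam b)) yb" "lam_too_small (Lam b) yb"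
    and ya: "adm (xt (Lam a)) ya" "lam_too_large (Lam a) ya"
  shows "\<kappa> < b - a"
proof (rule ccontr)
  assume "\<not> \<kappa> < b - a"
  then have gap: "b - a \<le> \<kappa>" by simp
  define l where "l = Lam b"
  define u where "u = Lam a"
  define rl where "rl = norm (yb - xt l)"
  define rh where "rh = norm (ya - xt u)"
  have a: "0 < a" using ab psi_lo_pos by simp
  have l: "0 < l" using a ab Lam_pos by (simp add: l_def)
  have large_l: "large_step (xt l) yb" and small: "l * \<omega> rl < 1/2"
    using yb unfolding lam_too_small_def l_def rl_def by auto
  have large_h: "large_step (xt u) ya" and big: "1 < u * \<omega> rh"
    using ya unfolding lam_too_large_def u_def rh_def by auto
  have wl: "0 \<le> \<omega> rl" using omega_nonneg by (simp add: rl_def)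
  have ul: "u * \<omega> rl \<le> 121/100 * (l * \<omega> rl)"
    using mult_right_mono[OF Lam_ratio_le[OF ab gap] wl] unfolding l_def u_def by simp
  have "\<omega> rh \<le> 8/5 * \<omega> rl"
  proof (cases "rh \<le> rl")
    case True
    then have "\<omega> rh \<le> \<omega> rl" by (intro omega_le) (auto simp: rh_def)
    with wl show ?thesis by simp
  next
    case False
    have "norm (xt l - xt u) \<le> \<delta> * l"
      unfolding l_def u_def using ab gap a x1_x2_dist by (intro query_dist_le) auto
    also have "\<dots> \<le> (\<eta> * c) * (2 * \<delta> * l)"
      using eta_c_ge delta_pos l mult_right_mono[OF eta_c_ge, of "2 * \<delta> * l"] by simp
    also have "\<dots> = \<eta> * (2 * c * \<delta> * l)" by (simp add: ac_simps)
    also have "\<dots> \<le> \<eta> * rl"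
      using too_small_radius_gt[OF l yb(2)[folded l_def]]
      by (intro mult_left_mono) (auto simp: \<eta>_def rl_def)
    finally show ?thesis
      using omega_ratio_le[OF yb(1)[folded l_def] large_l ya(1)[folded u_def] large_h] False
      unfolding l_def u_def rl_def rh_def by simp
  qed
  then have "u * \<omega> rh \<le> 8/5 * (u * \<omega> rl)"
    using a Lam_pos by (simp add: u_def mult_left_mono)
  with ul small big show False by linarith
qed

sublocale bisection_admissible "\<lambda>\<psi>. xt (Lam \<psi>)" "\<lambda>\<psi>. lam_too_small (Lam \<psi>)"
    "\<lambda>\<psi>. lam_too_large (Lam \<psi>)" \<psi>_lo \<psi>_hi adm \<kappa>
  using psi_lo_less_hi kappa_pos upper_not_too_large lower_not_too_small too_small_too_large_far_apart
  by unfold_locales (auto simp: not_less[symmetric])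

lemma settled_prox_outcome:
  assumes "settled (y, \<psi>)"
  shows "0 < Lam \<psi> \<and> prox_outcome y (Lam \<psi>)"
proof -
  have \<psi>: "0 < Lam \<psi>" using assms psi_lo_pos Lam_pos unfolding settled_def by auto
  have y: "adm (xt (Lam \<psi>)) y" "\<not> lam_too_small (Lam \<psi>) y" "\<not> lam_too_large (Lam \<psi>) y"
    using assms unfolding settled_def by auto
  show ?thesis
  proof (cases "large_step (xt (Lam \<psi>)) y")
    case True
    then show ?thesis
      using \<psi> y unfolding prox_outcome_def lam_too_small_def lam_too_large_def large_step_def
      by (auto simp: Let_def)
  next
    case False
    then show ?thesis
      using \<psi> y small_step_near_optimal unfolding prox_outcome_def large_step_def
      by (auto simp: Let_def)
  qed
qed

theorem prox_alg_returns:
  assumes "is_approx_prox_oracle g \<omega> \<alpha> \<delta> Orc"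
  shows "\<exists>y lam. returns_within prox_alg Orc
                   (6 + log 2 ((160 * \<mu> * R * c / \<delta> + 9 * R^2 / \<epsilon>) * \<omega> (8 * c * \<mu> * R)))
                   (y, lam)
                 \<and> 0 < lam \<and> prox_outcome y lam"
proof -
  let ?N = "6 + log 2 ((160 * \<mu> * R * c / \<delta> + 9 * R^2 / \<epsilon>) * \<omega> (8 * c * \<mu> * R))"
  have "real bisection_calls \<le> ?N"
    using bisection_calls_le by (simp add: bisection_calls_def)
  moreover have "\<forall>h x. adm x (Orc h x)"
    using assms unfolding is_approx_prox_oracle_def by blast
  ultimately obtain y \<psi> where ret: "returns_within bisection_alg Orc ?N (y, \<psi>)"
    and st: "settled (y, \<psi>)"
    using bisection_returns by (metis surj_pair)
  have "prox_alg = (\<lambda>h. map_sum id (\<lambda>(y, \<psi>). (y, Lam \<psi>)) (bisection_alg h))"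
    by (simp add: prox_alg_def fun_eq_iff)
  then have "returns_within prox_alg Orc ?N (y, Lam \<psi>)"
    using returns_within_map_output[OF ret, of "\<lambda>(y, \<psi>). (y, Lam \<psi>)"] by simp
  with settled_prox_outcome[OF st] show ?thesis by blast
qed

end

theorem mainTheorem16:
  fixes \<omega> \<omega>' :: "real \<Rightarrow> real"
    and \<gamma> \<alpha> \<mu> c \<delta> \<epsilon> R A :: real
    and x1 x2 :: "'a::euclidean_space"
  assumes eps: "\<epsilon> > 0"
    and R: "R > 0"
    and omega_nonneg: "\<forall>s\<ge>0. \<omega> s \<ge> 0"
    and omega_deriv: "\<forall>s\<ge>0. (\<omega> has_real_derivative \<omega>' s) (at s within {0..})"
    and omega_C1: "continuous_on {0..} \<omega>'"
    and omega_deriv_bounds: "\<forall>s>0. 0 < \<omega>' s \<and> \<omega>' s \<le> \<gamma> * \<omega> s / s"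
    and gamma: "\<gamma> \<ge> 1"
    and alpha: "0 \<le> \<alpha>" "\<alpha> < 1"
    and mu: "\<mu> = 8 / sqrt (1 - \<alpha>)"
    and c: "c \<ge> 1" "64 * (\<alpha> + 1 / c) * \<gamma>^2 \<le> 1"
    and delta_pos: "\<delta> > 0"
    and delta: "\<delta> \<le> min (\<epsilon> / (9 * \<mu> * R * c * ((1 + \<alpha>) * c + 1)))
                         (8 * \<mu> * R * \<omega> (8 * \<mu> * R))"
    and A: "1 / (2 * \<omega> (2 * \<mu> * R)) \<le> A" "A \<le> R^2 / \<epsilon>"
  shows "\<exists>alg :: ('a \<times> 'a) list \<Rightarrow> 'a + ('a \<times> real).
     \<forall>(g :: 'a \<Rightarrow> real) xstar Orc.
       convex_on UNIV g \<and>
       (\<forall>x. g differentiable (at x)) \<and> (\<forall>x. grad g differentiable (at x)) \<and>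
       (\<forall>x. g xstar \<le> g x) \<and> norm xstar \<le> R \<and>
       norm (x1 - xstar) \<le> \<mu> * R \<and> norm (x2 - xstar) \<le> \<mu> * R \<and>
       is_approx_prox_oracle g \<omega> \<alpha> \<delta> Orc
       \<longrightarrow>
       (\<exists>y lam. returns_within alg Orc
                 (6 + log 2 ((160 * \<mu> * R * c / \<delta> + 9 * R^2 / \<epsilon>) * \<omega> (8 * c * \<mu> * R)))
                 (y, lam) \<and>
          lam > 0 \<and>
          (let a = (lam + sqrt (lam^2 + 4 * lam * A)) / 2;
               xt = (a / (A + a)) *\<^sub>R x1 + (A / (A + a)) *\<^sub>R x2;
               r = norm (y - xt)
           in (g y \<le> g xstar + \<epsilon> \<and> \<omega> r * r \<le> c * \<delta>)
              \<or> (1/2 \<le> lam * \<omega> r \<and> lam * \<omega> r \<le> 1 \<and> \<omega> r * r > c * \<delta> \<and>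
                 norm (grad g y + \<omega> r *\<^sub>R (y - xt)) \<le> \<alpha> * \<omega> r * r + \<delta>)))"
proof -
  interpret prox_search \<omega> \<omega>' \<gamma> \<alpha> \<mu> c \<delta> \<epsilon> R A x1 x2
    by unfold_locales (fact assms)+
  show ?thesis
    apply (intro exI[of _ prox_alg] allI impI)
    subgoal premises H for g xstar Orc
    proof -
      interpret prox_search_instance \<omega> \<omega>' \<gamma> \<alpha> \<mu> c \<delta> \<epsilon> R A x1 x2 g xstar
        using H by unfold_locales auto
      show ?thesis
        using prox_alg_returns H
        unfolding prox_outcome_def acc_point_def acc_coeff_def approx_prox_step_def Let_def
        by blast
    qed
    done
qed

end
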